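(* If $G$ and $H$ are almost-3-symmetric graphs, each with at least 3 vertices, then $\mathrm{Inflate}(G,H)$ is almost-3-symmetric.
   Context: All graphs are finite and simple. For a graph $G$ on $n$ vertices and a graph $F$ on $k$ vertices, the density $t(F,G)$ is the number of $k$-element subsets $S\subseteq V(G)$ whose induced subgraph is isomorphic to $F$, divided by $\binom{n}{k}$. $K_2$ is the single edge, $K_3$ the triangle, $P_3$ the path with 3 vertices and 2 edges, $K_2\cup K_1$ the 3-vertex graph with exactly one edge, and $\overline{K_3}$ the 3-vertex graph with no edges. A graph $G$ with at least 3 vertices is almost-3-symmetric if $t(K_2,G)=1/2$, $t(K_3,G)=t(\overline{K_3},G)$, and $t(P_3,G)=t(K_2\cup K_1,G)$. The inflation $\mathrm{Inflate}(G,H)$ (lexicographic product) is the graph with vertex set $V(G)\times V(H)$ in which $(g,h)$ and $(g',h')$ are adjacent iff either $g$ and $g'$ are adjacent in $G$, or $g=g'$ and $h,h'$ are adjacent in $H$. *)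

theory Defs
  imports Complex_Main
begin

type_synonym 'a graph = "'a set \<times> 'a set set"

definition verts :: "'a graph \<Rightarrow> 'a set" where "verts G = fst G"
definition edges :: "'a graph \<Rightarrow> 'a set set" where "edges G = snd G"

definition simple_graph :: "'a graph \<Rightarrow> bool" where
  "simple_graph G \<longleftrightarrow> finite (verts G) \<and>
     (\<forall>e\<in>edges G. e \<subseteq> verts G \<and> card e = 2)"

definition adj :: "'a graph \<Rightarrow> 'a \<Rightarrow> 'a \<Rightarrow> bool" where
  "adj G u v \<longleftrightarrow> {u, v} \<in> edges G"

definition induced_iso :: "'a graph \<Rightarrow> 'a set \<Rightarrow> 'b graph \<Rightarrow> bool" where
  "induced_iso G S F \<longleftrightarrow> (\<exists>f. bij_betw f S (verts F) \<and>
     (\<forall>u\<in>S. \<forall>v\<in>S. adj G u v \<longleftrightarrow> adj F (f u) (f v)))"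

definition density :: "'b graph \<Rightarrow> 'a graph \<Rightarrow> real" where
  "density F G = real (card {S. S \<subseteq> verts G \<and> card S = card (verts F) \<and> induced_iso G S F})
                 / real (card (verts G) choose card (verts F))"

definition K2 :: "nat graph" where "K2 = ({0,1}, {{0,1}})"
definition K3 :: "nat graph" where "K3 = ({0,1,2}, {{0,1},{0,2},{1,2}})"
definition P3 :: "nat graph" where "P3 = ({0,1,2}, {{0,1},{1,2}})"
definition K2_K1 :: "nat graph" where "K2_K1 = ({0,1,2}, {{0,1}})"
definition coK3 :: "nat graph" where "coK3 = ({0,1,2}, {})"

definition almost_3_symmetric :: "'a graph \<Rightarrow> bool" where
  "almost_3_symmetric G \<longleftrightarrow> card (verts G) \<ge> 3 \<and>
     density K2 G = 1/2 \<and> density K3 G = density coK3 G \<and> density P3 G = density K2_K1 G"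

definition inflate :: "'a graph \<Rightarrow> 'b graph \<Rightarrow> ('a \<times> 'b) graph" where
  "inflate G H = (verts G \<times> verts H,
     {{(g,h),(g',h')} | g h g' h'. g \<in> verts G \<and> g' \<in> verts G \<and> h \<in> verts H \<and> h' \<in> verts H \<and>
        (adj G g g' \<or> (g = g' \<and> adj H h h'))})"

end

theory Submission
  imports Defs
begin

text \<open>For \<open>b\<close> a truth value let \<open>A\<^sub>b(x,y)\<close> indicate that \<open>x \<noteq> y\<close> and that the adjacency of
  \<open>x, y\<close> is \<open>b\<close>. Counting ordered tuples, twice the number of edges is \<open>\<Sum> A\<^sub>True\<close>, and six
  times the number of induced copies of \<open>K\<^sub>3\<close>, \<open>co-K\<^sub>3\<close>, \<open>P\<^sub>3\<close>, \<open>K\<^sub>2 \<union> K\<^sub>1\<close> is a sum of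
  triangle sums \<open>\<Sum> A\<^sub>b\<^sub>1(x,y) A\<^sub>b\<^sub>2(y,z) A\<^sub>b\<^sub>3(x,z)\<close> over the colour patterns of the graph.
  So a graph is almost-3-symmetric iff these sums are invariant under swapping the two colours.
  For the inflation, \<open>A\<^sub>b = A\<^sub>b\<^sup>G \<otimes> J + I \<otimes> A\<^sub>b\<^sup>H\<close>; expanding, every sum for
  \<open>Inflate(G,H)\<close> is a polynomial in the corresponding sums for \<open>G\<close> and \<open>H\<close>, and their invariance
  under the colour swap carries over to the inflation.\<close>

lemma card_eq_mult_card_image:
  assumes "finite A" and "\<And>y. y \<in> f ` A \<Longrightarrow> card {x \<in> A. f x = y} = k"
  shows "card A = k * card (f ` A)"
proof -
  have "card A = (\<Sum>y\<in>f ` A. card {x \<in> A. f x = y})"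
    unfolding card_eq_sum by (rule sum.image_gen[OF assms(1)])
  also have "\<dots> = k * card (f ` A)" using assms(2) by simp
  finally show ?thesis .
qed

lemma distinct_pairs_of_doubleton:
  assumes "u \<noteq> v"
  shows "{(x,y). {x,y} = {u,v} \<and> x \<noteq> y} = {(u,v),(v,u)}"
  using assms by (auto simp: doubleton_eq_iff)

lemma distinct_triples_of_triple:
  assumes "u \<noteq> v" "u \<noteq> w" "v \<noteq> w"
  shows "{(x,y,z). {x,y,z} = {u,v,w} \<and> x \<noteq> y \<and> x \<noteq> z \<and> y \<noteq> z}
    = {(u,v,w),(u,w,v),(v,u,w),(v,w,u),(w,u,v),(w,v,u)}" (is "?L = ?R")
proof
  show "?R \<subseteq> ?L" using assms by (auto simp: insert_commute)
  show "?L \<subseteq> ?R"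
  proof
    fix t assume "t \<in> ?L"
    then obtain x y z where t: "t = (x,y,z)"
      and xyz: "{x,y,z} = {u,v,w}" "x \<noteq> y" "x \<noteq> z" "y \<noteq> z"
      by auto
    from xyz(1) have "x \<in> {u,v,w}" "y \<in> {u,v,w}" "z \<in> {u,v,w}"
      "u \<in> {x,y,z}" "v \<in> {x,y,z}" "w \<in> {x,y,z}"
      by blast+
    then show "t \<in> ?R" using assms xyz(2-4) unfolding t by auto
  qed
qed

lemma sum_of_bool_distinct_pairs:
  assumes "finite V"
  shows "(\<Sum>x\<in>V. \<Sum>y\<in>V. of_bool (x \<noteq> y \<and> P {x,y}) :: real)
    = 2 * card {S. S \<subseteq> V \<and> card S = 2 \<and> P S}"
proof -
  let ?T = "{(x,y) \<in> V \<times> V. x \<noteq> y \<and> P {x,y}}"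
  let ?f = "\<lambda>(x,y). {x,y}"
  have image: "?f ` ?T = {S. S \<subseteq> V \<and> card S = 2 \<and> P S}"
    by (auto simp: card_2_iff image_iff)
  have fibre: "card {t \<in> ?T. ?f t = S} = 2" if S: "S \<in> ?f ` ?T" for S
  proof -
    obtain u v where uv: "(u,v) \<in> ?T" and S_eq: "S = {u,v}"
      using S by auto
    have "{t \<in> ?T. ?f t = S} = {(x,y). {x,y} = {u,v} \<and> x \<noteq> y}"
      using uv unfolding S_eq by (auto simp del: insert_subset simp: insert_subset[symmetric])
    then show ?thesis using uv by (simp add: distinct_pairs_of_doubleton)
  qed
  have "(\<Sum>x\<in>V. \<Sum>y\<in>V. of_bool (x \<noteq> y \<and> P {x,y}) :: real)
      = (\<Sum>(x,y)\<in>V \<times> V. of_bool (x \<noteq> y \<and> P {x,y}))"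
    by (simp only: sum.cartesian_product' prod.case)
  also have "\<dots> = real (card ?T)"
    using assms by (simp add: case_prod_unfold Int_def mem_Times_iff)
  also have "card ?T = 2 * card (?f ` ?T)"
    by (rule card_eq_mult_card_image[OF finite_subset[of _ "V \<times> V"] fibre]) (use assms in auto)
  also note image
  finally show ?thesis .
qed

lemma sum_of_bool_distinct_triples:
  assumes "finite V"
  shows "(\<Sum>x\<in>V. \<Sum>y\<in>V. \<Sum>z\<in>V. of_bool (x \<noteq> y \<and> x \<noteq> z \<and> y \<noteq> z \<and> P {x,y,z}) :: real)
    = 6 * card {S. S \<subseteq> V \<and> card S = 3 \<and> P S}"
proof -
  let ?T = "{(x,y,z) \<in> V \<times> V \<times> V. x \<noteq> y \<and> x \<noteq> z \<and> y \<noteq> z \<and> P {x,y,z}}"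
  let ?f = "\<lambda>(x,y,z). {x,y,z}"
  have image: "?f ` ?T = {S. S \<subseteq> V \<and> card S = 3 \<and> P S}"
    by (auto simp: card_3_iff image_iff)
  have fibre: "card {t \<in> ?T. ?f t = S} = 6" if S: "S \<in> ?f ` ?T" for S
  proof -
    obtain u v w where uvw: "(u,v,w) \<in> ?T" and S_eq: "S = {u,v,w}"
      using S by auto
    have "{t \<in> ?T. ?f t = S} = {(x,y,z). {x,y,z} = {u,v,w} \<and> x \<noteq> y \<and> x \<noteq> z \<and> y \<noteq> z}"
      using uvw unfolding S_eq by (auto simp del: insert_subset simp: insert_subset[symmetric])
    then show ?thesis using uvw by (simp add: distinct_triples_of_triple)
  qed
  have "(\<Sum>x\<in>V. \<Sum>y\<in>V. \<Sum>z\<in>V. of_bool (x \<noteq> y \<and> x \<noteq> z \<and> y \<noteq> z \<and> P {x,y,z}) :: real)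
      = (\<Sum>(x,y,z)\<in>V \<times> V \<times> V. of_bool (x \<noteq> y \<and> x \<noteq> z \<and> y \<noteq> z \<and> P {x,y,z}))"
    by (simp only: sum.cartesian_product' prod.case)
  also have "\<dots> = real (card ?T)"
    using assms by (simp add: case_prod_unfold Int_def mem_Times_iff)
  also have "card ?T = 6 * card (?f ` ?T)"
    by (rule card_eq_mult_card_image[OF finite_subset[of _ "V \<times> V \<times> V"] fibre]) (use assms in auto)
  also note image
  finally show ?thesis .
qed

definition pair_sum :: "('a \<Rightarrow> 'a \<Rightarrow> real) \<Rightarrow> 'a set \<Rightarrow> real" where
  "pair_sum A V = (\<Sum>x\<in>V. \<Sum>y\<in>V. A x y)"

definition triangle_sum ::
  "('a \<Rightarrow> 'a \<Rightarrow> real) \<Rightarrow> ('a \<Rightarrow> 'a \<Rightarrow> real) \<Rightarrow> ('a \<Rightarrow> 'a \<Rightarrow> real) \<Rightarrow> 'a set \<Rightarrow> real" where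
  "triangle_sum A1 A2 A3 V = (\<Sum>x\<in>V. \<Sum>y\<in>V. \<Sum>z\<in>V. A1 x y * A2 y z * A3 x z)"

text \<open>The adjacency matrix of a lexicographic product, \<open>A \<otimes> J + I \<otimes> B\<close>.\<close>

definition lex_kernel ::
  "('a \<Rightarrow> 'a \<Rightarrow> real) \<Rightarrow> ('b \<Rightarrow> 'b \<Rightarrow> real) \<Rightarrow> 'a \<times> 'b \<Rightarrow> 'a \<times> 'b \<Rightarrow> real" where
  "lex_kernel A B p q = A (fst p) (fst q) + of_bool (fst p = fst q) * B (snd p) (snd q)"

lemma sum_of_bool_eq_mult:
  "finite A \<Longrightarrow> (\<Sum>x\<in>A. of_bool (a = x) * f x) = of_bool (a \<in> A) * (f a :: 'b :: semiring_1)"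
  by (simp add: if_distrib[of "\<lambda>x. x * _"] cong: if_cong)

lemma pair_sum_lex_kernel:
  assumes "finite VG"
  shows "pair_sum (lex_kernel A B) (VG \<times> VH)
    = real (card VH)^2 * pair_sum A VG + real (card VG) * pair_sum B VH"
  using assms
  by (simp add: pair_sum_def lex_kernel_def sum.cartesian_product' sum.swap[where A=VH and B=VG]
      sum.distrib sum_distrib_left[symmetric] power2_eq_square sum_of_bool_eq_mult)

lemma triangle_sum_lex_kernel:
  assumes "finite VG" and "\<And>g. g \<in> VG \<Longrightarrow> A1 g g = 0 \<and> A2 g g = 0 \<and> A3 g g = 0"
  shows "triangle_sum (lex_kernel A1 B1) (lex_kernel A2 B2) (lex_kernel A3 B3) (VG \<times> VH)
    = real (card VH)^3 * triangle_sum A1 A2 A3 VG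
      + real (card VH) * pair_sum B1 VH * (\<Sum>g\<in>VG. \<Sum>g'\<in>VG. A2 g g' * A3 g g')
      + real (card VH) * pair_sum B2 VH * (\<Sum>g\<in>VG. \<Sum>g'\<in>VG. A1 g g' * A3 g g')
      + real (card VH) * pair_sum B3 VH * (\<Sum>g\<in>VG. \<Sum>g'\<in>VG. A1 g g' * A2 g' g)
      + real (card VG) * triangle_sum B1 B2 B3 VH"
proof -
  let ?m = "real (card VH)"
  let ?K = "\<lambda>g g' g''. ?m^3 * (A1 g g' * A2 g' g'' * A3 g g'')
       + of_bool (g = g') * (?m * pair_sum B1 VH * A2 g g'' * A3 g g'')
       + of_bool (g' = g'') * (?m * pair_sum B2 VH * A1 g g' * A3 g g')
       + of_bool (g = g'') * (?m * pair_sum B3 VH * A1 g g' * A2 g' g)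
       + of_bool (g = g') * of_bool (g' = g'') * triangle_sum B1 B2 B3 VH"
  txt \<open>A zero diagonal of the \<open>A\<^sub>i\<close> kills the terms with two Kronecker deltas.\<close>
  have fibre_sum: "(\<Sum>h\<in>VH. \<Sum>h'\<in>VH. \<Sum>h''\<in>VH. lex_kernel A1 B1 (g,h) (g',h')
      * lex_kernel A2 B2 (g',h') (g'',h'') * lex_kernel A3 B3 (g,h) (g'',h'')) = ?K g g' g''"
    if "g \<in> VG" for g g' g''
    using assms(2)[OF that]
    by (cases "g = g'"; cases "g' = g''"; cases "g = g''")
      (simp_all add: lex_kernel_def pair_sum_def triangle_sum_def sum.distrib
        sum_distrib_left[symmetric] sum_distrib_right[symmetric] algebra_simps power3_eq_cube)
  have "triangle_sum (lex_kernel A1 B1) (lex_kernel A2 B2) (lex_kernel A3 B3) (VG \<times> VH)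
    = (\<Sum>g\<in>VG. \<Sum>g'\<in>VG. \<Sum>g''\<in>VG. \<Sum>h\<in>VH. \<Sum>h'\<in>VH. \<Sum>h''\<in>VH. lex_kernel A1 B1 (g,h) (g',h')
      * lex_kernel A2 B2 (g',h') (g'',h'') * lex_kernel A3 B3 (g,h) (g'',h''))"
    by (simp only: triangle_sum_def sum.cartesian_product' sum.swap[where A=VH and B=VG] prod.case)
  also have "\<dots> = (\<Sum>g\<in>VG. \<Sum>g'\<in>VG. \<Sum>g''\<in>VG. ?K g g' g'')"
    by (intro sum.cong refl) (rule fibre_sum)
  finally show ?thesis
    using assms(1)
    by (simp add: sum.distrib sum_distrib_left[symmetric] sum_distrib_right[symmetric] mult.assoc
        sum_of_bool_eq_mult triangle_sum_def)
qed

lemma adj_commute: "adj G x y = adj G y x"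
  by (simp add: adj_def insert_commute)

lemma simple_graph_not_adj_self: "simple_graph G \<Longrightarrow> \<not> adj G x x"
  by (auto simp: simple_graph_def adj_def)

definition adj_indicator :: "'a graph \<Rightarrow> bool \<Rightarrow> 'a \<Rightarrow> 'a \<Rightarrow> real" where
  "adj_indicator X b x y = of_bool (x \<noteq> y \<and> adj X x y = b)"

definition pair_count :: "'a graph \<Rightarrow> bool \<Rightarrow> real" where
  "pair_count X b = pair_sum (adj_indicator X b) (verts X)"

definition triangle_count :: "'a graph \<Rightarrow> bool \<Rightarrow> bool \<Rightarrow> bool \<Rightarrow> real" where
  "triangle_count X b1 b2 b3
     = triangle_sum (adj_indicator X b1) (adj_indicator X b2) (adj_indicator X b3) (verts X)"

definition cherry_count :: "'a graph \<Rightarrow> bool \<Rightarrow> real" where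
  "cherry_count X b
     = triangle_count X b b (\<not> b) + triangle_count X b (\<not> b) b + triangle_count X (\<not> b) b b"

lemma adj_indicator_self: "adj_indicator X b x x = 0"
  by (simp add: adj_indicator_def)

lemma adj_indicator_commute: "adj_indicator X b x y = adj_indicator X b y x"
  by (auto simp: adj_indicator_def adj_commute[of X x y])

lemma adj_indicator_mult_self:
  "adj_indicator X b x y * adj_indicator X c x y = of_bool (b = c) * adj_indicator X b x y"
  by (auto simp: adj_indicator_def)

lemma pair_count_True_add_False:
  assumes "finite (verts X)"
  shows "pair_count X True + pair_count X False
    = real (card (verts X)) * (real (card (verts X)) - 1)"
proof -
  have "adj_indicator X True x y + adj_indicator X False x y = of_bool (x \<noteq> y)" for x y
    by (simp add: adj_indicator_def)
  then have "pair_count X True + pair_count X False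
      = (\<Sum>x\<in>verts X. \<Sum>y\<in>verts X. of_bool (x \<noteq> y))"
    by (simp add: pair_count_def pair_sum_def sum.distrib[symmetric])
  also have "\<dots> = (\<Sum>x\<in>verts X. real (card (verts X)) - 1)"
  proof (intro sum.cong refl)
    fix x assume "x \<in> verts X"
    moreover have "verts X \<inter> {y. x \<noteq> y} = verts X - {x}" by auto
    moreover have "card (verts X) \<ge> 1"
      using assms \<open>x \<in> verts X\<close> by (auto simp: Suc_le_eq card_gt_0_iff)
    ultimately show "(\<Sum>y\<in>verts X. of_bool (x \<noteq> y)) = real (card (verts X)) - 1"
      using assms by (simp add: of_nat_diff)
  qed
  finally show ?thesis by simp
qed

lemma induced_iso_K2_iff:
  assumes "x \<noteq> y" and "\<And>w. \<not> adj X w w"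
  shows "induced_iso X {x,y} K2 \<longleftrightarrow> adj X x y"
proof
  assume "induced_iso X {x,y} K2"
  then obtain f where f: "bij_betw f {x,y} (verts K2)"
    "\<forall>u\<in>{x,y}. \<forall>v\<in>{x,y}. adj X u v \<longleftrightarrow> adj K2 (f u) (f v)"
    unfolding induced_iso_def by blast
  have "{f x, f y} = {0,1}" using bij_betw_imp_surj_on[OF f(1)] by (auto simp: K2_def verts_def)
  then have "adj K2 (f x) (f y)" by (simp add: adj_def K2_def edges_def)
  then show "adj X x y" using f(2) by auto
next
  assume "adj X x y"
  define f where "f w = (if w = x then (0::nat) else 1)" for w
  have "bij_betw f {x,y} (verts K2)"
    unfolding bij_betw_def inj_on_def using assms(1) by (auto simp: f_def K2_def verts_def)
  moreover have "\<forall>u\<in>{x,y}. \<forall>v\<in>{x,y}. adj X u v \<longleftrightarrow> adj K2 (f u) (f v)"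
    using assms \<open>adj X x y\<close> adj_commute[of X x y]
    by (auto simp: f_def adj_def K2_def edges_def doubleton_eq_iff)
  ultimately show "induced_iso X {x,y} K2" unfolding induced_iso_def by blast
qed

lemma induced_iso_triple_iff:
  assumes distinct: "x \<noteq> y" "x \<noteq> z" "y \<noteq> z"
    and irrefl: "\<And>w. \<not> adj X w w" "\<And>i. \<not> adj F i i"
  shows "induced_iso X {x,y,z} F \<longleftrightarrow> (\<exists>i j k. verts F = {i,j,k} \<and> i \<noteq> j \<and> i \<noteq> k \<and> j \<noteq> k \<and>
     (adj X x y \<longleftrightarrow> adj F i j) \<and> (adj X y z \<longleftrightarrow> adj F j k) \<and> (adj X x z \<longleftrightarrow> adj F i k))"
proof
  assume "induced_iso X {x,y,z} F"
  then obtain f where f: "bij_betw f {x,y,z} (verts F)"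
    "\<forall>u\<in>{x,y,z}. \<forall>v\<in>{x,y,z}. adj X u v \<longleftrightarrow> adj F (f u) (f v)"
    unfolding induced_iso_def by blast
  have "verts F = {f x, f y, f z}" using bij_betw_imp_surj_on[OF f(1)] by auto
  moreover have "f x \<noteq> f y" "f x \<noteq> f z" "f y \<noteq> f z"
    using bij_betw_imp_inj_on[OF f(1)] distinct by (auto dest: inj_onD)
  ultimately show "\<exists>i j k. verts F = {i,j,k} \<and> i \<noteq> j \<and> i \<noteq> k \<and> j \<noteq> k \<and>
     (adj X x y \<longleftrightarrow> adj F i j) \<and> (adj X y z \<longleftrightarrow> adj F j k) \<and> (adj X x z \<longleftrightarrow> adj F i k)"
    using f(2) by blast
next
  assume "\<exists>i j k. verts F = {i,j,k} \<and> i \<noteq> j \<and> i \<noteq> k \<and> j \<noteq> k \<and>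
     (adj X x y \<longleftrightarrow> adj F i j) \<and> (adj X y z \<longleftrightarrow> adj F j k) \<and> (adj X x z \<longleftrightarrow> adj F i k)"
  then obtain i j k where ijk: "verts F = {i,j,k}" "i \<noteq> j" "i \<noteq> k" "j \<noteq> k"
     "adj X x y \<longleftrightarrow> adj F i j" "adj X y z \<longleftrightarrow> adj F j k" "adj X x z \<longleftrightarrow> adj F i k"
    by blast
  define f where "f w = (if w = x then i else if w = y then j else k)" for w
  have f_xyz: "f x = i" "f y = j" "f z = k" using distinct by (auto simp: f_def)
  have "bij_betw f {x,y,z} (verts F)"
    unfolding bij_betw_def inj_on_def using distinct ijk(1-4) by (auto simp: f_xyz)
  moreover have "adj X y x \<longleftrightarrow> adj F j i" "adj X z y \<longleftrightarrow> adj F k j" "adj X z x \<longleftrightarrow> adj F k i"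
    using ijk(5-7) by (simp_all add: adj_commute)
  then have "\<forall>u\<in>{x,y,z}. \<forall>v\<in>{x,y,z}. adj X u v \<longleftrightarrow> adj F (f u) (f v)"
    using ijk(5-7) irrefl by (auto simp: f_xyz)
  ultimately show "induced_iso X {x,y,z} F" unfolding induced_iso_def by blast
qed

lemma ex_ordering_012_iff:
  "(\<exists>i j k. {0::nat,1,2} = {i,j,k} \<and> i \<noteq> j \<and> i \<noteq> k \<and> j \<noteq> k \<and> Q i j k) \<longleftrightarrow>
    Q 0 1 2 \<or> Q 0 2 1 \<or> Q 1 0 2 \<or> Q 1 2 0 \<or> Q 2 0 1 \<or> Q 2 1 0"
proof
  assume "\<exists>i j k. {0::nat,1,2} = {i,j,k} \<and> i \<noteq> j \<and> i \<noteq> k \<and> j \<noteq> k \<and> Q i j k"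
  then obtain i j k where ijk: "{0::nat,1,2} = {i,j,k}" "i \<noteq> j" "i \<noteq> k" "j \<noteq> k" "Q i j k"
    by blast
  then have "i \<in> {0,1,2}" "j \<in> {0,1,2}" "k \<in> {0,1,2}" by blast+
  with ijk(2-5) show "Q 0 1 2 \<or> Q 0 2 1 \<or> Q 1 0 2 \<or> Q 1 2 0 \<or> Q 2 0 1 \<or> Q 2 1 0"
    by auto
next
  assume "Q 0 1 2 \<or> Q 0 2 1 \<or> Q 1 0 2 \<or> Q 1 2 0 \<or> Q 2 0 1 \<or> Q 2 1 0"
  then show "\<exists>i j k. {0::nat,1,2} = {i,j,k} \<and> i \<noteq> j \<and> i \<noteq> k \<and> j \<noteq> k \<and> Q i j k"
    by (elim disjE) (force simp: insert_commute)+
qed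

lemma adj_K3: "adj K3 i j \<longleftrightarrow> i \<in> {0,1,2} \<and> j \<in> {0,1,2} \<and> i \<noteq> j"
  by (auto simp: adj_def K3_def edges_def doubleton_eq_iff)

lemma adj_coK3: "\<not> adj coK3 i j"
  by (simp add: adj_def coK3_def edges_def)

lemma adj_P3: "adj P3 i j \<longleftrightarrow> {i,j} = {0,1} \<or> {i,j} = {1,2}"
  by (simp add: adj_def P3_def edges_def)

lemma adj_K2_K1: "adj K2_K1 i j \<longleftrightarrow> {i,j} = {0,1}"
  by (simp add: adj_def K2_K1_def edges_def)

lemma adj_irrefl_K3: "\<not> adj K3 i i" and adj_irrefl_coK3: "\<not> adj coK3 i i"
  and adj_irrefl_P3: "\<not> adj P3 i i" and adj_irrefl_K2_K1: "\<not> adj K2_K1 i i"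
  by (auto simp: adj_K3 adj_coK3 adj_P3 adj_K2_K1 doubleton_eq_iff)

lemma verts_small_graphs:
  "verts K3 = {0,1,2}" "verts coK3 = {0,1,2}" "verts P3 = {0,1,2}" "verts K2_K1 = {0,1,2}"
  "verts K2 = {0,1}"
  by (simp_all add: verts_def K3_def coK3_def P3_def K2_K1_def K2_def)

lemma induced_iso_K3_iff:
  assumes "x \<noteq> y" "x \<noteq> z" "y \<noteq> z" and "simple_graph X"
  shows "induced_iso X {x,y,z} K3 \<longleftrightarrow> adj X x y \<and> adj X y z \<and> adj X x z"
  unfolding induced_iso_triple_iff[OF assms(1-3) simple_graph_not_adj_self[OF assms(4)] adj_irrefl_K3]
    verts_small_graphs(1) ex_ordering_012_iff
  by (simp add: adj_K3)

lemma induced_iso_coK3_iff: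
  assumes "x \<noteq> y" "x \<noteq> z" "y \<noteq> z" and "simple_graph X"
  shows "induced_iso X {x,y,z} coK3 \<longleftrightarrow> \<not> adj X x y \<and> \<not> adj X y z \<and> \<not> adj X x z"
  unfolding induced_iso_triple_iff[OF assms(1-3) simple_graph_not_adj_self[OF assms(4)] adj_irrefl_coK3]
    verts_small_graphs(2) ex_ordering_012_iff
  by (simp add: adj_coK3)

lemma induced_iso_P3_iff:
  assumes "x \<noteq> y" "x \<noteq> z" "y \<noteq> z" and "simple_graph X"
  shows "induced_iso X {x,y,z} P3 \<longleftrightarrow>
    adj X x y \<and> adj X y z \<and> \<not> adj X x z \<or> adj X x y \<and> \<not> adj X y z \<and> adj X x z \<or>
    \<not> adj X x y \<and> adj X y z \<and> adj X x z"
  unfolding induced_iso_triple_iff[OF assms(1-3) simple_graph_not_adj_self[OF assms(4)] adj_irrefl_P3]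
    verts_small_graphs(3) ex_ordering_012_iff
  by (simp add: adj_P3 doubleton_eq_iff) blast

lemma induced_iso_K2_K1_iff:
  assumes "x \<noteq> y" "x \<noteq> z" "y \<noteq> z" and "simple_graph X"
  shows "induced_iso X {x,y,z} K2_K1 \<longleftrightarrow>
    \<not> adj X x y \<and> \<not> adj X y z \<and> adj X x z \<or> \<not> adj X x y \<and> adj X y z \<and> \<not> adj X x z \<or>
    adj X x y \<and> \<not> adj X y z \<and> \<not> adj X x z"
  unfolding induced_iso_triple_iff[OF assms(1-3) simple_graph_not_adj_self[OF assms(4)] adj_irrefl_K2_K1]
    verts_small_graphs(4) ex_ordering_012_iff
  by (simp add: adj_K2_K1 doubleton_eq_iff) blast

definition induced_count :: "'b graph \<Rightarrow> 'a graph \<Rightarrow> nat" where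
  "induced_count F X = card {S. S \<subseteq> verts X \<and> card S = card (verts F) \<and> induced_iso X S F}"

lemma density_eq_induced_count:
  "density F X = real (induced_count F X) / real (card (verts X) choose card (verts F))"
  by (simp add: density_def induced_count_def)

lemma two_induced_count_K2:
  assumes "simple_graph X"
  shows "2 * real (induced_count K2 X) = pair_count X True"
proof -
  have card_verts_K2: "card (verts K2) = 2" by (simp add: verts_small_graphs)
  have "finite (verts X)" using assms by (simp add: simple_graph_def)
  then have "2 * real (induced_count K2 X)
      = (\<Sum>x\<in>verts X. \<Sum>y\<in>verts X. of_bool (x \<noteq> y \<and> induced_iso X {x,y} K2))"
    using sum_of_bool_distinct_pairs[of "verts X" "\<lambda>S. induced_iso X S K2"]
    by (simp add: induced_count_def card_verts_K2 del: sum_of_bool_eq)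
  also have "\<dots> = pair_count X True"
    using induced_iso_K2_iff[OF _ simple_graph_not_adj_self[OF assms]]
    by (simp add: pair_count_def pair_sum_def adj_indicator_def cong: conj_cong)
  finally show ?thesis .
qed

lemma six_induced_count_triple:
  fixes F :: "'b graph"
  assumes "finite (verts X)" and "card (verts F) = 3"
    and iso: "\<And>x y z. x \<noteq> y \<Longrightarrow> x \<noteq> z \<Longrightarrow> y \<noteq> z \<Longrightarrow>
      induced_iso X {x,y,z} F \<longleftrightarrow> \<Phi> (adj X x y) (adj X y z) (adj X x z)"
  shows "6 * real (induced_count F X)
    = (\<Sum>b1\<in>UNIV. \<Sum>b2\<in>UNIV. \<Sum>b3\<in>UNIV. of_bool (\<Phi> b1 b2 b3) * triangle_count X b1 b2 b3)"
proof -
  have "6 * real (induced_count F X) = (\<Sum>x\<in>verts X. \<Sum>y\<in>verts X. \<Sum>z\<in>verts X.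
      of_bool (x \<noteq> y \<and> x \<noteq> z \<and> y \<noteq> z \<and> induced_iso X {x,y,z} F))"
    using assms(1,2) sum_of_bool_distinct_triples[of "verts X" "\<lambda>S. induced_iso X S F"]
    by (simp add: induced_count_def del: sum_of_bool_eq)
  also have "\<dots> = (\<Sum>x\<in>verts X. \<Sum>y\<in>verts X. \<Sum>z\<in>verts X. \<Sum>b1\<in>UNIV. \<Sum>b2\<in>UNIV. \<Sum>b3\<in>UNIV.
      of_bool (\<Phi> b1 b2 b3) * (adj_indicator X b1 x y * adj_indicator X b2 y z * adj_indicator X b3 x z))"
  proof (intro sum.cong refl)
    fix x y z
    show "of_bool (x \<noteq> y \<and> x \<noteq> z \<and> y \<noteq> z \<and> induced_iso X {x,y,z} F)
      = (\<Sum>b1\<in>UNIV. \<Sum>b2\<in>UNIV. \<Sum>b3\<in>UNIV. of_bool (\<Phi> b1 b2 b3)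
          * (adj_indicator X b1 x y * adj_indicator X b2 y z * adj_indicator X b3 x z))"
      using iso[of x y z]
      by (cases "adj X x y"; cases "adj X y z"; cases "adj X x z")
        (auto simp: UNIV_bool adj_indicator_def simp del: sum_mult_of_bool_eq sum_of_bool_mult_eq)
  qed
  also have "\<dots> = (\<Sum>b1\<in>UNIV. \<Sum>b2\<in>UNIV. \<Sum>b3\<in>UNIV. of_bool (\<Phi> b1 b2 b3) * triangle_count X b1 b2 b3)"
    by (simp add: UNIV_bool triangle_count_def triangle_sum_def sum.distrib sum_distrib_left)
  finally show ?thesis .
qed

lemma six_induced_count_K3:
  assumes "simple_graph X"
  shows "6 * real (induced_count K3 X) = triangle_count X True True True"
  using assms
  by (subst six_induced_count_triple[where \<Phi>="\<lambda>a b c. a \<and> b \<and> c"])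
    (auto simp: simple_graph_def verts_small_graphs induced_iso_K3_iff UNIV_bool)

lemma six_induced_count_coK3:
  assumes "simple_graph X"
  shows "6 * real (induced_count coK3 X) = triangle_count X False False False"
  using assms
  by (subst six_induced_count_triple[where \<Phi>="\<lambda>a b c. \<not> a \<and> \<not> b \<and> \<not> c"])
    (auto simp: simple_graph_def verts_small_graphs induced_iso_coK3_iff UNIV_bool)

lemma six_induced_count_P3:
  assumes "simple_graph X"
  shows "6 * real (induced_count P3 X) = cherry_count X True"
  using assms
  by (subst six_induced_count_triple[where
        \<Phi>="\<lambda>a b c. a \<and> b \<and> \<not> c \<or> a \<and> \<not> b \<and> c \<or> \<not> a \<and> b \<and> c"])
    (auto simp: simple_graph_def verts_small_graphs induced_iso_P3_iff UNIV_bool cherry_count_def)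

lemma six_induced_count_K2_K1:
  assumes "simple_graph X"
  shows "6 * real (induced_count K2_K1 X) = cherry_count X False"
  using assms
  by (subst six_induced_count_triple[where
        \<Phi>="\<lambda>a b c. \<not> a \<and> \<not> b \<and> c \<or> \<not> a \<and> b \<and> \<not> c \<or> a \<and> \<not> b \<and> \<not> c"])
    (auto simp: simple_graph_def verts_small_graphs induced_iso_K2_K1_iff UNIV_bool cherry_count_def)

lemma real_choose_two: "real (n choose 2) = real n * (real n - 1) / 2"
proof -
  have "even (n * (n - 1))" by (cases n) auto
  then have "real (n choose 2) = real (n * (n - 1)) / 2"
    unfolding choose_two by (simp add: real_of_nat_div)
  then show ?thesis by (cases n) (auto simp: algebra_simps)
qed

lemma almost_3_symmetric_iff_counts:
  assumes "simple_graph X"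
  shows "almost_3_symmetric X \<longleftrightarrow> card (verts X) \<ge> 3 \<and>
    pair_count X True = pair_count X False \<and>
    triangle_count X True True True = triangle_count X False False False \<and>
    cherry_count X True = cherry_count X False"
proof (cases "card (verts X) \<ge> 3")
  case True
  let ?n = "real (card (verts X))"
  have "real (induced_count K2 X) = pair_count X True / 2"
    using two_induced_count_K2[OF assms] by simp
  moreover have "card (verts K2) = 2" by (simp add: verts_small_graphs)
  moreover have "?n * (?n - 1) > 0" using True by simp
  ultimately have "density K2 X = 1/2 \<longleftrightarrow> 2 * pair_count X True = ?n * (?n - 1)"
    using True by (auto simp: density_eq_induced_count real_choose_two field_simps)
  moreover have "pair_count X True + pair_count X False = ?n * (?n - 1)"
    using assms by (simp add: pair_count_True_add_False simple_graph_def)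
  ultimately have K2: "density K2 X = 1/2 \<longleftrightarrow> pair_count X True = pair_count X False"
    by linarith
  have density_iff: "density F X = density F' X
      \<longleftrightarrow> 6 * real (induced_count F X) = 6 * real (induced_count F' X)"
    if "card (verts F) = 3" "card (verts F') = 3" for F F' :: "nat graph"
    using True that by (simp add: density_eq_induced_count)
  have "density K3 X = density coK3 X
      \<longleftrightarrow> triangle_count X True True True = triangle_count X False False False"
    unfolding six_induced_count_K3[OF assms, symmetric] six_induced_count_coK3[OF assms, symmetric]
    by (rule density_iff) (simp_all add: verts_small_graphs)
  moreover have "density P3 X = density K2_K1 X \<longleftrightarrow> cherry_count X True = cherry_count X False"
    unfolding six_induced_count_P3[OF assms, symmetric] six_induced_count_K2_K1[OF assms, symmetric]
    by (rule density_iff) (simp_all add: verts_small_graphs)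
  ultimately show ?thesis
    using True K2 by (simp add: almost_3_symmetric_def)
qed (simp add: almost_3_symmetric_def)

lemma verts_inflate: "verts (inflate G H) = verts G \<times> verts H"
  by (simp add: inflate_def verts_def)

lemma adj_inflate:
  "adj (inflate G H) (g,h) (g',h') \<longleftrightarrow> g \<in> verts G \<and> g' \<in> verts G \<and> h \<in> verts H \<and> h' \<in> verts H \<and>
     (adj G g g' \<or> (g = g' \<and> adj H h h'))"
proof
  assume "adj (inflate G H) (g,h) (g',h')"
  then obtain g1 h1 g2 h2 where e: "{(g,h),(g',h')} = {(g1,h1),(g2,h2)}"
     "g1 \<in> verts G" "g2 \<in> verts G" "h1 \<in> verts H" "h2 \<in> verts H"
     "adj G g1 g2 \<or> (g1 = g2 \<and> adj H h1 h2)"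
    unfolding adj_def[of "inflate G H"] by (auto simp: inflate_def edges_def)
  then show "g \<in> verts G \<and> g' \<in> verts G \<and> h \<in> verts H \<and> h' \<in> verts H \<and>
     (adj G g g' \<or> (g = g' \<and> adj H h h'))"
    using adj_commute[of G g1 g2] adj_commute[of H h1 h2] by (auto simp: doubleton_eq_iff)
next
  assume "g \<in> verts G \<and> g' \<in> verts G \<and> h \<in> verts H \<and> h' \<in> verts H \<and>
     (adj G g g' \<or> (g = g' \<and> adj H h h'))"
  then show "adj (inflate G H) (g,h) (g',h')"
    unfolding adj_def[of "inflate G H"] by (auto simp: inflate_def edges_def)
qed

lemma simple_graph_inflate:
  assumes "simple_graph G" and "simple_graph H"
  shows "simple_graph (inflate G H)"
  unfolding simple_graph_def
proof
  show "finite (verts (inflate G H))" using assms by (simp add: verts_inflate simple_graph_def)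
  show "\<forall>e\<in>edges (inflate G H). e \<subseteq> verts (inflate G H) \<and> card e = 2"
  proof
    fix e assume "e \<in> edges (inflate G H)"
    then obtain g h g' h' where e: "e = {(g,h),(g',h')}"
      "g \<in> verts G" "g' \<in> verts G" "h \<in> verts H" "h' \<in> verts H"
      "adj G g g' \<or> (g = g' \<and> adj H h h')"
      by (auto simp: inflate_def edges_def)
    have "(g,h) \<noteq> (g',h')"
      using e(6) simple_graph_not_adj_self[OF assms(1)] simple_graph_not_adj_self[OF assms(2)] by auto
    then show "e \<subseteq> verts (inflate G H) \<and> card e = 2" using e by (auto simp: verts_inflate)
  qed
qed

lemma adj_indicator_inflate:
  assumes "simple_graph G" and "simple_graph H"
    and "p \<in> verts G \<times> verts H" and "q \<in> verts G \<times> verts H"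
  shows "adj_indicator (inflate G H) b p q = lex_kernel (adj_indicator G b) (adj_indicator H b) p q"
  using assms simple_graph_not_adj_self[OF assms(1)]
  by (cases p; cases q) (auto simp: adj_indicator_def lex_kernel_def adj_inflate)

lemma pair_count_inflate:
  assumes "simple_graph G" and "simple_graph H"
  shows "pair_count (inflate G H) b
    = real (card (verts H))^2 * pair_count G b + real (card (verts G)) * pair_count H b"
proof -
  have "pair_count (inflate G H) b
      = pair_sum (lex_kernel (adj_indicator G b) (adj_indicator H b)) (verts G \<times> verts H)"
    unfolding pair_count_def pair_sum_def verts_inflate
    by (intro sum.cong refl) (simp add: adj_indicator_inflate assms)
  then show ?thesis
    using assms by (simp add: pair_sum_lex_kernel simple_graph_def pair_count_def)
qed

lemma sum_adj_indicator_mult: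
  "(\<Sum>x\<in>V. \<Sum>y\<in>V. adj_indicator X b x y * adj_indicator X c x y)
    = of_bool (b = c) * pair_sum (adj_indicator X b) V"
  "(\<Sum>x\<in>V. \<Sum>y\<in>V. adj_indicator X b x y * adj_indicator X c y x)
    = of_bool (b = c) * pair_sum (adj_indicator X b) V"
  by (simp_all add: adj_indicator_mult_self adj_indicator_commute[of X c y x for y x]
      pair_sum_def sum_distrib_left)

lemma triangle_count_inflate:
  assumes "simple_graph G" and "simple_graph H"
  shows "triangle_count (inflate G H) b1 b2 b3
    = real (card (verts H))^3 * triangle_count G b1 b2 b3
      + real (card (verts H)) * pair_count H b1 * of_bool (b2 = b3) * pair_count G b2
      + real (card (verts H)) * pair_count H b2 * of_bool (b1 = b3) * pair_count G b1
      + real (card (verts H)) * pair_count H b3 * of_bool (b1 = b2) * pair_count G b1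
      + real (card (verts G)) * triangle_count H b1 b2 b3"
proof -
  let ?L = "\<lambda>b. lex_kernel (adj_indicator G b) (adj_indicator H b)"
  have "triangle_count (inflate G H) b1 b2 b3 = triangle_sum (?L b1) (?L b2) (?L b3) (verts G \<times> verts H)"
    unfolding triangle_count_def triangle_sum_def verts_inflate
    by (intro sum.cong refl) (simp add: adj_indicator_inflate assms)
  then show ?thesis
    using assms
    by (simp add: triangle_sum_lex_kernel simple_graph_def adj_indicator_self sum_adj_indicator_mult
        pair_count_def triangle_count_def)
qed

lemma monochromatic_triangle_count_inflate:
  assumes "simple_graph G" and "simple_graph H"
  shows "triangle_count (inflate G H) b b b
    = real (card (verts H))^3 * triangle_count G b b b
      + 3 * real (card (verts H)) * pair_count H b * pair_count G b
      + real (card (verts G)) * triangle_count H b b b"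
  using assms by (simp add: triangle_count_inflate algebra_simps)

lemma cherry_count_inflate:
  assumes "simple_graph G" and "simple_graph H"
  shows "cherry_count (inflate G H) b
    = real (card (verts H))^3 * cherry_count G b
      + 3 * real (card (verts H)) * pair_count H (\<not> b) * pair_count G b
      + real (card (verts G)) * cherry_count H b"
  using assms by (simp add: cherry_count_def triangle_count_inflate algebra_simps)

theorem mainTheorem17:
  fixes G :: "'a graph" and H :: "'b graph"
  assumes "simple_graph G" and "simple_graph H"
    and "card (verts G) \<ge> 3" and "card (verts H) \<ge> 3"
    and "almost_3_symmetric G" and "almost_3_symmetric H"
  shows "almost_3_symmetric (inflate G H)"
proof -
  have G: "pair_count G True = pair_count G False"
      "triangle_count G True True True = triangle_count G False False False"
      "cherry_count G True = cherry_count G False"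
    using assms(5) almost_3_symmetric_iff_counts[OF assms(1)] by auto
  have H: "pair_count H True = pair_count H False"
      "triangle_count H True True True = triangle_count H False False False"
      "cherry_count H True = cherry_count H False"
    using assms(6) almost_3_symmetric_iff_counts[OF assms(2)] by auto
  have "3 * 3 \<le> card (verts (inflate G H))"
    unfolding verts_inflate card_cartesian_product using assms(3,4) by (rule mult_le_mono)
  then show ?thesis
    using G H assms(1,2)
    by (simp add: almost_3_symmetric_iff_counts simple_graph_inflate pair_count_inflate
        monochromatic_triangle_count_inflate cherry_count_inflate)
qed

end
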